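(* The Max-Egal objective is weak-proof against a manipulator $m^+$ (one who can only add edges) over undirected networks. That is, for every $k$, every undirected social network $G$, every agent $m$ and every manipulation in which $m$ adds edges incident to $m$ (yielding $G^m$), it is not the case that both \[\min_{P\in O(G^m)} u(m,P)>\min_{P\in O(G)} u(m,P)\quad\text{and}\quad \max_{P\in O(G^m)} u(m,P)>\max_{P\in O(G)} u(m,P),\] where $O(\cdot)$ denotes the set of Max-Egal solutions and $u(m,P)$ is computed in the true network $G$.
   Context: Let $A=\{a_1,\dots,a_n\}$ be a finite nonempty set of agents and $G=\langle A,E\rangle$ an undirected graph without self-loops (the social network). $N(a)$ is the set of neighbours of $a$ in $G$. For a coalition $C\subseteq A$ with $a\in C$, $u(a,C)=|C\cap N(a)|$. For $0<k\le n$, $\Pi_k$ is the set of partitions of $A$ into exactly $k$ nonempty coalitions; for $P\in\Pi_k$, $u(a,P)=u(a,C)$ where $C\in P$ contains $a$. The Max-Egal objective: $O(G)$ is the set of $P\in\Pi_k$ maximizing $\min_{a\in A}u(a,P)$ (utilities computed in the network in question). A manipulator $m$ of type $m^+$ in an undirected network may add any set of new edges $\{m,a\}$ (non-edges of $G$); the resulting reported network is $G^m$. The utility $u(m,P)$ of the manipulator is always computed with respect to his true neighbours in the original $G$. *)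

theory Defs
  imports Main
begin

definition undirected_graph :: "'a set \<Rightarrow> 'a set set \<Rightarrow> bool" where
  "undirected_graph A E \<longleftrightarrow> (\<forall>e\<in>E. \<exists>x y. e = {x, y} \<and> x \<noteq> y \<and> x \<in> A \<and> y \<in> A)"

definition nbrs :: "'a set set \<Rightarrow> 'a \<Rightarrow> 'a set" where
  "nbrs E a = {b. {a, b} \<in> E \<and> b \<noteq> a}"

definition partitions_k :: "'a set \<Rightarrow> nat \<Rightarrow> 'a set set set" where
  "partitions_k A k = {P. (\<forall>C\<in>P. C \<noteq> {}) \<and> \<Union>P = A \<and>
      (\<forall>C\<in>P. \<forall>D\<in>P. C \<noteq> D \<longrightarrow> C \<inter> D = {}) \<and> finite P \<and> card P = k}"

definition coal :: "'a set set \<Rightarrow> 'a \<Rightarrow> 'a set" where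
  "coal P a = (THE C. C \<in> P \<and> a \<in> C)"

definition util :: "'a set set \<Rightarrow> 'a \<Rightarrow> 'a set set \<Rightarrow> nat" where
  "util E a P = card (coal P a \<inter> nbrs E a)"

definition egal_value :: "'a set \<Rightarrow> 'a set set \<Rightarrow> 'a set set \<Rightarrow> nat" where
  "egal_value A E P = Min ((\<lambda>a. util E a P) ` A)"

definition max_egal :: "'a set \<Rightarrow> 'a set set \<Rightarrow> nat \<Rightarrow> 'a set set set" where
  "max_egal A E k = {P \<in> partitions_k A k.
      \<forall>Q \<in> partitions_k A k. egal_value A E Q \<le> egal_value A E P}"

definition plus_manipulation :: "'a set \<Rightarrow> 'a set set \<Rightarrow> 'a \<Rightarrow> 'a set set \<Rightarrow> bool" where
  "plus_manipulation A E m E' \<longleftrightarrow>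
     (\<exists>F. F \<subseteq> {{m, a} | a. a \<in> A \<and> a \<noteq> m \<and> {m, a} \<notin> E} \<and> E' = E \<union> F)"

end

theory Submission
  imports Defs
begin

text \<open>Adding edges at m raises every utility, and that of every agent other than m by at most
one. If the optimal egalitarian value does not increase, every old Max-Egal partition stays
optimal, so the worst optimum for m cannot improve. If it increases, a new optimum in which m
gets more than the old optimal value keeps every other agent at or above that value in G, so it
is an old optimum; hence the best optimum for m cannot improve either.\<close>

lemma nbrs_subset:
  assumes "undirected_graph A E"
  shows "nbrs E a \<subseteq> A"
proof
  fix b assume "b \<in> nbrs E a"
  then obtain x y where "{a, b} = {x, y}" "x \<in> A" "y \<in> A"
    using assms unfolding nbrs_def undirected_graph_def by blast
  then show "b \<in> A" by (metis doubleton_eq_iff)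
qed

lemma nbrs_mono: "E \<subseteq> E' \<Longrightarrow> nbrs E a \<subseteq> nbrs E' a"
  unfolding nbrs_def by auto

lemma plus_manipulation_supset: "plus_manipulation A E m E' \<Longrightarrow> E \<subseteq> E'"
  unfolding plus_manipulation_def by auto

lemma undirected_graph_plus_manipulation:
  assumes "undirected_graph A E" "m \<in> A" "plus_manipulation A E m E'"
  shows "undirected_graph A E'"
  using assms unfolding undirected_graph_def plus_manipulation_def by blast

lemma nbrs_plus_manipulation:
  assumes "plus_manipulation A E m E'" "a \<noteq> m"
  shows "nbrs E' a \<subseteq> insert m (nbrs E a)"
proof
  fix b assume b: "b \<in> nbrs E' a"
  show "b \<in> insert m (nbrs E a)"
  proof (cases "{a, b} \<in> E")
    case True
    then show ?thesis using b unfolding nbrs_def by auto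
  next
    case False
    then obtain c where "{a, b} = {m, c}"
      using assms(1) b unfolding plus_manipulation_def nbrs_def by auto
    then show ?thesis using assms(2) by (metis doubleton_eq_iff insertI1)
  qed
qed

lemma util_mono:
  assumes "finite A" "undirected_graph A E'" "E \<subseteq> E'"
  shows "util E a P \<le> util E' a P"
proof -
  have "finite (nbrs E' a)"
    using nbrs_subset[OF assms(2)] assms(1) by (rule finite_subset)
  then show ?thesis
    unfolding util_def using nbrs_mono[OF assms(3)] by (intro card_mono) auto
qed

lemma util_plus_manipulation_le:
  assumes "finite A" "undirected_graph A E" "plus_manipulation A E m E'" "a \<noteq> m"
  shows "util E' a P \<le> util E a P + 1"
proof -
  have fin: "finite (coal P a \<inter> nbrs E a)"
    using nbrs_subset[OF assms(2)] assms(1) by (meson finite_Int finite_subset)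
  have "util E' a P \<le> card (insert m (coal P a \<inter> nbrs E a))"
    unfolding util_def using fin nbrs_plus_manipulation[OF assms(3,4)]
    by (intro card_mono) auto
  also have "\<dots> \<le> util E a P + 1"
    unfolding util_def using fin by (simp add: card_insert_if)
  finally show ?thesis .
qed

lemma egal_value_le_util: "finite A \<Longrightarrow> a \<in> A \<Longrightarrow> egal_value A E P \<le> util E a P"
  unfolding egal_value_def by simp

lemma egal_value_geI:
  "finite A \<Longrightarrow> A \<noteq> {} \<Longrightarrow> (\<And>a. a \<in> A \<Longrightarrow> x \<le> util E a P) \<Longrightarrow> x \<le> egal_value A E P"
  unfolding egal_value_def by simp

lemma egal_value_mono:
  assumes "finite A" "A \<noteq> {}" "\<And>a. a \<in> A \<Longrightarrow> util E a P \<le> util E' a P"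
  shows "egal_value A E P \<le> egal_value A E' P"
proof (rule egal_value_geI[OF assms(1,2)])
  fix a assume a: "a \<in> A"
  have "egal_value A E P \<le> util E a P" using egal_value_le_util[OF assms(1) a] .
  also have "\<dots> \<le> util E' a P" using assms(3)[OF a] .
  finally show "egal_value A E P \<le> util E' a P" .
qed

definition max_egal_value :: "'a set \<Rightarrow> 'a set set \<Rightarrow> nat \<Rightarrow> nat" where
  "max_egal_value A E k = Max (egal_value A E ` partitions_k A k)"

lemma finite_partitions_k: "finite A \<Longrightarrow> finite (partitions_k A k)"
  by (rule finite_subset[of _ "Pow (Pow A)"]) (auto simp: partitions_k_def)

lemma egal_value_le_max_egal_value:
  "finite A \<Longrightarrow> Q \<in> partitions_k A k \<Longrightarrow> egal_value A E Q \<le> max_egal_value A E k"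
  unfolding max_egal_value_def by (simp add: finite_partitions_k)

lemma max_egal_iff:
  assumes "finite A"
  shows "P \<in> max_egal A E k \<longleftrightarrow>
    P \<in> partitions_k A k \<and> max_egal_value A E k \<le> egal_value A E P"
proof -
  have "max_egal_value A E k \<le> egal_value A E P \<longleftrightarrow>
      (\<forall>Q\<in>partitions_k A k. egal_value A E Q \<le> egal_value A E P)"
    if "P \<in> partitions_k A k"
    unfolding max_egal_value_def using assms that
    by (subst Max_le_iff) (auto simp: finite_partitions_k)
  then show ?thesis unfolding max_egal_def by blast
qed

lemma max_egal_value_eq:
  assumes "finite A" "P \<in> max_egal A E k"
  shows "egal_value A E P = max_egal_value A E k"
proof (rule antisym)
  have "P \<in> partitions_k A k" using assms(2) max_egal_iff[OF assms(1)] by blast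
  then show "egal_value A E P \<le> max_egal_value A E k"
    by (rule egal_value_le_max_egal_value[OF assms(1)])
  show "max_egal_value A E k \<le> egal_value A E P"
    using assms(2) max_egal_iff[OF assms(1)] by blast
qed

lemma max_egal_nonempty:
  assumes "finite A" "partitions_k A k \<noteq> {}"
  shows "max_egal A E k \<noteq> {}"
proof -
  have "max_egal_value A E k \<in> egal_value A E ` partitions_k A k"
    unfolding max_egal_value_def using assms by (simp add: finite_partitions_k)
  then obtain P where "P \<in> partitions_k A k" "egal_value A E P = max_egal_value A E k"
    by auto
  then have "P \<in> max_egal A E k" by (simp add: max_egal_iff[OF assms(1)])
  then show ?thesis by blast
qed

lemma finite_max_egal: "finite A \<Longrightarrow> finite (max_egal A E k)"
  unfolding max_egal_def by (simp add: finite_partitions_k)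

lemma max_egal_subset:
  assumes "finite A" "\<And>P. egal_value A E P \<le> egal_value A E' P"
    and "max_egal_value A E' k \<le> max_egal_value A E k"
  shows "max_egal A E k \<subseteq> max_egal A E' k"
proof
  fix P assume P: "P \<in> max_egal A E k"
  have "max_egal_value A E' k \<le> egal_value A E' P"
    using assms(3) max_egal_value_eq[OF assms(1) P] assms(2)[of P] by linarith
  then show "P \<in> max_egal A E' k" using P by (simp add: max_egal_iff[OF assms(1)])
qed

lemma max_egal_plus_manipulation_mem:
  assumes "finite A" "A \<noteq> {}" "undirected_graph A E" "plus_manipulation A E m E'"
    and "max_egal_value A E k < max_egal_value A E' k"
    and P: "P \<in> max_egal A E' k" and m: "max_egal_value A E k < util E m P"
  shows "P \<in> max_egal A E k"
proof -
  have "max_egal_value A E k \<le> util E a P" if "a \<in> A" for a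
  proof (cases "a = m")
    case False
    have "max_egal_value A E' k \<le> util E' a P"
      using max_egal_value_eq[OF assms(1) P] egal_value_le_util[OF assms(1) \<open>a \<in> A\<close>] by metis
    then show ?thesis
      using util_plus_manipulation_le[OF assms(1,3,4) False, of P] assms(5) by linarith
  qed (use m in simp)
  then show ?thesis
    using P max_egal_iff[OF assms(1)] egal_value_geI[OF assms(1,2)] by blast
qed

lemma util_le_Max_plus_manipulation:
  assumes "finite A" "A \<noteq> {}" "undirected_graph A E" "m \<in> A" "plus_manipulation A E m E'"
    and "max_egal_value A E k < max_egal_value A E' k"
    and P: "P \<in> max_egal A E' k"
  shows "util E m P \<le> Max ((\<lambda>P. util E m P) ` max_egal A E k)"
proof (cases "util E m P \<le> max_egal_value A E k")
  case True
  have "max_egal A E k \<noteq> {}"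
    using P max_egal_nonempty[OF assms(1)] unfolding max_egal_def by blast
  then obtain P0 where P0: "P0 \<in> max_egal A E k" by blast
  have "max_egal_value A E k \<le> util E m P0"
    using max_egal_value_eq[OF assms(1) P0] egal_value_le_util[OF assms(1,4)] by metis
  also have "\<dots> \<le> Max ((\<lambda>P. util E m P) ` max_egal A E k)"
    using P0 finite_max_egal[OF assms(1)] by simp
  finally show ?thesis using True by linarith
next
  case False
  then have "P \<in> max_egal A E k"
    using max_egal_plus_manipulation_mem[OF assms(1-3,5,6) P] by simp
  then show ?thesis using finite_max_egal[OF assms(1)] by simp
qed

theorem theorem1:
  fixes A :: "'a set" and E E' :: "'a set set" and m :: 'a and k :: nat
  assumes "finite A" and "A \<noteq> {}"
    and "undirected_graph A E"
    and "0 < k" and "k \<le> card A"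
    and "m \<in> A"
    and "plus_manipulation A E m E'"
  shows "\<not> ((Min ((\<lambda>P. util E m P) ` max_egal A E' k) > Min ((\<lambda>P. util E m P) ` max_egal A E k))
          \<and> (Max ((\<lambda>P. util E m P) ` max_egal A E' k) > Max ((\<lambda>P. util E m P) ` max_egal A E k)))"
proof (cases "partitions_k A k = {}")
  case True
  then show ?thesis unfolding max_egal_def by simp
next
  case False
  let ?O = "max_egal A E k" and ?O' = "max_egal A E' k" and ?u = "\<lambda>P. util E m P"
  have ne: "?O \<noteq> {}" "?O' \<noteq> {}" and fin: "finite ?O'"
    using max_egal_nonempty[OF assms(1) False] finite_max_egal[OF assms(1)] by auto
  have E': "undirected_graph A E'" "E \<subseteq> E'"
    using undirected_graph_plus_manipulation[OF assms(3,6,7)] plus_manipulation_supset[OF assms(7)] .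
  show ?thesis
  proof (cases "max_egal_value A E' k \<le> max_egal_value A E k")
    case True
    have "?O \<subseteq> ?O'"
      using max_egal_subset[OF assms(1) egal_value_mono[OF assms(1,2) util_mono[OF assms(1) E']] True] .
    then have "Min (?u ` ?O') \<le> Min (?u ` ?O)"
      using Min_antimono ne(1) fin by (metis finite_imageI image_is_empty image_mono)
    then show ?thesis by simp
  next
    case False
    then have "max_egal_value A E k < max_egal_value A E' k" by simp
    then have "\<forall>P\<in>?O'. ?u P \<le> Max (?u ` ?O)"
      using util_le_Max_plus_manipulation[OF assms(1-3,6,7)] by blast
    then have "Max (?u ` ?O') \<le> Max (?u ` ?O)"
      using ne(2) fin by (simp add: Max_le_iff)
    then show ?thesis by simp
  qed
qed

end
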